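(* Let $N,M\ge1$, $\mathcal H_+=\mathbb C^N$, $\mathcal H_-=\mathbb C^M$, $\mathcal H=\mathcal H_+\oplus\mathcal H_-$. Fix $b>0$ and $d_1,\dots,d_M\in i\mathbb R$, and put $B=\mathrm{diag}(b,0,\dots,0)$ ($N\times N$) and $D=\mathrm{diag}(d_1,\dots,d_M)$. For $\alpha=(\alpha_1,\dots,\alpha_M)\in\mathbb C^M$ with $|\alpha_1|^2+\dots+|\alpha_M|^2=1$, let $u$ be the $M\times N$ matrix whose first column is $\alpha$ and whose other columns are zero, and let $$\mu=\begin{pmatrix}0&-Bu^*\\ uB&D\end{pmatrix}.$$ Then for all integers $n\ge1$ and $1\le k\le n+1$ there exist polynomials $p^n_{j,k}$, $j=1,\dots,M$, in $M$ variables with real coefficients depending smoothly on $b,d_1,\dots,d_M$, such that for all such $\alpha$ the matrix $i^{n+1}(\mu H^{n-1}_{k-1}(\mu))_{--}u$ has first column with entries $i\,p^n_{j,k}(|\alpha_1|^2,\dots,|\alpha_M|^2)\,\alpha_j$ ($j=1,\dots,M$) and all other columns zero. Equivalently, the equation $\frac{\partial}{\partial t^n_k}u=i^{n+1}(\mu H^{n-1}_{k-1}(\mu))_{--}u$ becomes $$\frac{\partial}{\partial t^n_k}\alpha_j=i\,p^n_{j,k}(|\alpha_1|^2,\dots,|\alpha_M|^2)\,\alpha_j,\qquad j=1,\dots,M.$$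
   Context: $P_+$ and $P_-$ denote the orthogonal projectors of $\mathcal H$ onto $\mathcal H_+$ and $\mathcal H_-$; for an operator $X$ on $\mathcal H$, $X_{--}$ denotes the block $P_-XP_-$ regarded as an operator on $\mathcal H_-$. For integers $m\ge 0$ and $0\le l\le m+1$ and a matrix $\mu$ on $\mathcal H$, define $$H^m_l(\mu)=\sum_{\substack{i_0,\dots,i_m\in\{0,1\}\\ i_0+\dots+i_m=l}} P_+^{i_0}\mu P_+^{i_1}\mu\cdots\mu P_+^{i_m},$$ with $P_+^0=I$ the identity and $P_+^1=P_+$. *)

theory Defs
  imports "HOL-Analysis.Analysis"
begin

text \<open>Matrices are HOL-Analysis matrices: an M x N complex matrix is
  complex^'n^'m (rows indexed by 'm, columns by 'n).  H_+ = C^N is indexed by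
  the finite type 'n, H_- = C^M by 'm, and H = H_+ (+) H_- by the sum type 'n + 'm
  (Inl = H_+ coordinates, Inr = H_- coordinates).\<close>

definition first_idx :: "'n::{finite,wellorder}" where
  "first_idx = (LEAST i. True)"

definition cadj :: "complex^'n^'m \<Rightarrow> complex^'m^'n" where
  "cadj A = (\<chi> i j. cnj (A $ j $ i))"

definition Pplus :: "complex^('n::finite + 'm::finite)^('n + 'm)" where
  "Pplus = (\<chi> i j. if i = j \<and> isl i then 1 else 0)"

definition block_mat ::
  "complex^'n^'n \<Rightarrow> complex^'m^'n \<Rightarrow> complex^'n^'m \<Rightarrow> complex^'m^'m
     \<Rightarrow> complex^('n::finite + 'm::finite)^('n + 'm)" where
  "block_mat A Bm C Dm = (\<chi> i j. case i of
       Inl a \<Rightarrow> (case j of Inl c \<Rightarrow> A $ a $ c | Inr c \<Rightarrow> Bm $ a $ c)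
     | Inr a \<Rightarrow> (case j of Inl c \<Rightarrow> C $ a $ c | Inr c \<Rightarrow> Dm $ a $ c))"

definition minus_block :: "complex^('n::finite + 'm::finite)^('n + 'm) \<Rightarrow> complex^'m^'m" where
  "minus_block X = (\<chi> a c. X $ Inr a $ Inr c)"

definition Ppow :: "nat \<Rightarrow> complex^('n::finite + 'm::finite)^('n + 'm)" where
  "Ppow i = (if i = 0 then mat 1 else Pplus)"

fun Hword :: "complex^('n::finite + 'm::finite)^('n + 'm) \<Rightarrow> nat \<Rightarrow> (nat \<Rightarrow> nat)
     \<Rightarrow> complex^('n + 'm)^('n + 'm)" where
  "Hword \<mu> 0 i = Ppow (i 0)"
| "Hword \<mu> (Suc m) i = Hword \<mu> m i ** \<mu> ** Ppow (i (Suc m))"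

definition Hml :: "nat \<Rightarrow> nat \<Rightarrow> complex^('n::finite + 'm::finite)^('n + 'm)
     \<Rightarrow> complex^('n + 'm)^('n + 'm)" where
  "Hml m l \<mu> = (\<Sum>i\<in>{i \<in> {..m} \<rightarrow>\<^sub>E {0,1}. (\<Sum>r\<le>m. i r) = l}. Hword \<mu> m i)"

coinductive C_inf_on :: "'a::euclidean_space set \<Rightarrow> ('a \<Rightarrow> real) \<Rightarrow> bool" for U where
  "(\<forall>x\<in>U. f differentiable (at x)) \<Longrightarrow>
   (\<forall>v\<in>Basis. C_inf_on U (\<lambda>x. frechet_derivative f (at x) v)) \<Longrightarrow> C_inf_on U f"

definition poly_eval :: "nat \<Rightarrow> (('m::finite \<Rightarrow> nat) \<Rightarrow> real) \<Rightarrow> ('m \<Rightarrow> real) \<Rightarrow> real" where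
  "poly_eval D c x = (\<Sum>e\<in>{e. \<forall>j. e j \<le> D}. c e * (\<Prod>j\<in>UNIV. x j ^ e j))"

end

theory Submission
  imports Defs
begin

text \<open>Write z_j = |alpha_j|^2 and d_j = i delta_j. Call a vector of H an ansatz vector of phase t
  if its H_+ component is i^(t+1) h e_1 and its H_- component is (i^t g_j alpha_j)_j, where h and
  the g_j are real polynomials in (b, delta, z). P_+ preserves this form and mu raises the phase by
  one: the H_- part is sent to -b (sum_j cnj(alpha_j) i^t g_j alpha_j) e_1 = i^(t+2) b (sum_j z_j g_j) e_1,
  and the H_+ part together with D gives (i^(t+1) (b h + delta_j g_j) alpha_j)_j. Hence
  mu H^(n-1)_(k-1)(mu) maps (0, alpha), the first column of u, to an ansatz vector of phase n, and the
  first column of i^(n+1) (mu H^(n-1)_(k-1)(mu))_(--) u is (i (-1)^n g_j alpha_j)_j. Finally, a real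
  polynomial in (b, delta, z) is a polynomial in z whose coefficients are polynomials, hence smooth
  functions, of (b, delta).\<close>

section \<open>Real polynomial functions\<close>

lemma real_polynomial_function_has_derivative:
  fixes f :: "'a::real_normed_vector \<Rightarrow> real"
  assumes "real_polynomial_function f"
  shows "\<exists>f'. (\<forall>x. (f has_derivative f' x) (at x)) \<and> (\<forall>v. real_polynomial_function (\<lambda>x. f' x v))"
  using assms
proof induction
  case (linear f)
  then show ?case
    by (intro exI[of _ "\<lambda>x. f"]) (auto intro: bounded_linear_imp_has_derivative)
next
  case (const c)
  show ?case by (intro exI[of _ "\<lambda>x h. 0"]) auto
next
  case (add f g)
  then obtain f' g' where "\<forall>x. (f has_derivative f' x) (at x)" "\<forall>v. real_polynomial_function (\<lambda>x. f' x v)"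
    "\<forall>x. (g has_derivative g' x) (at x)" "\<forall>v. real_polynomial_function (\<lambda>x. g' x v)"
    by blast
  then show ?case
    by (intro exI[of _ "\<lambda>x h. f' x h + g' x h"]) (auto intro: has_derivative_add)
next
  case (mult f g)
  then obtain f' g' where "\<forall>x. (f has_derivative f' x) (at x)" "\<forall>v. real_polynomial_function (\<lambda>x. f' x v)"
    "\<forall>x. (g has_derivative g' x) (at x)" "\<forall>v. real_polynomial_function (\<lambda>x. g' x v)"
    by blast
  with mult.hyps show ?case
    by (intro exI[of _ "\<lambda>x h. f x * g' x h + f' x h * g x"]) (fastforce intro: has_derivative_mult)
qed

lemma real_polynomial_function_C_inf_on:
  assumes "real_polynomial_function f"
  shows "C_inf_on U f"
  using assms
proof (coinduction arbitrary: f rule: C_inf_on.coinduct)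
  case (C_inf_on f)
  then obtain f' where f': "\<And>x. (f has_derivative f' x) (at x)"
    and poly: "\<And>v. real_polynomial_function (\<lambda>x. f' x v)"
    using real_polynomial_function_has_derivative by blast
  have "frechet_derivative f (at x) = f' x" for x
    using f' by (rule frechet_derivative_at[symmetric])
  with f' poly show ?case
    by (auto simp: differentiable_def)
qed

lemma finite_exponent_box: "finite {e::'m::finite \<Rightarrow> nat. \<forall>j. e j \<le> D}"
proof -
  have "{e::'m \<Rightarrow> nat. \<forall>j. e j \<le> D} = Pi\<^sub>E UNIV (\<lambda>_. {..D})"
    by (auto simp: PiE_UNIV_domain)
  then show ?thesis
    by (simp add: finite_PiE)
qed

lemma poly_eval_raise_degree:
  assumes "D \<le> D'"
  shows "poly_eval D c x = poly_eval D' (\<lambda>e. if \<forall>j. e j \<le> D then c e else 0) x"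
  unfolding poly_eval_def
  using assms finite_exponent_box
  by (intro sum.mono_neutral_cong_left) (auto intro: le_trans)

lemma poly_eval_degree_zero: "poly_eval 0 c x = c (\<lambda>_. 0)"
proof -
  have "{e::'a \<Rightarrow> nat. \<forall>j. e j \<le> 0} = {\<lambda>_. 0}"
    by auto
  then show ?thesis
    by (simp add: poly_eval_def)
qed

lemma poly_eval_add: "poly_eval D c x + poly_eval D c' x = poly_eval D (\<lambda>e. c e + c' e) x"
  by (simp add: poly_eval_def sum.distrib distrib_right)

lemma poly_eval_coordinate:
  "poly_eval 1 (\<lambda>e. if e = (\<lambda>i. if i = j then 1 else 0) then 1 else 0) x = x j"
proof -
  have "(\<Prod>i\<in>UNIV. x i ^ (if i = j then 1 else 0)) = x j"
    by (simp add: if_distrib[of "power _"] cong: if_cong)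
  then show ?thesis
    by (simp add: poly_eval_def finite_exponent_box if_distrib[of "\<lambda>c. c * _"] cong: if_cong)
qed

lemma poly_eval_mult:
  "poly_eval D c x * poly_eval D' c' x =
   poly_eval (D + D')
     (\<lambda>k. \<Sum>(e, f)\<in>{(e, f). (\<forall>j. e j \<le> D) \<and> (\<forall>j. f j \<le> D') \<and> (\<lambda>j. e j + f j) = k}. c e * c' f) x"
proof -
  define A where "A = {e::'a \<Rightarrow> nat. \<forall>j. e j \<le> D}"
  define A' where "A' = {e::'a \<Rightarrow> nat. \<forall>j. e j \<le> D'}"
  define monomial where "monomial e = (\<Prod>j\<in>UNIV. x j ^ e j)" for e :: "'a \<Rightarrow> nat"
  define add_exp where "add_exp = (\<lambda>(e::'a \<Rightarrow> nat, f). \<lambda>j. e j + f j)"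
  define summand where "summand = (\<lambda>(e, f). c e * c' f * monomial (add_exp (e, f)))"
  have fin: "finite (A \<times> A')"
    by (simp add: A_def A'_def finite_exponent_box)
  have "poly_eval D c x * poly_eval D' c' x = (\<Sum>ef\<in>A \<times> A'. summand ef)"
    by (simp add: poly_eval_def A_def A'_def summand_def add_exp_def monomial_def sum_product
        sum.cartesian_product power_add prod.distrib mult_ac)
  also have "\<dots> = (\<Sum>k\<in>{k. \<forall>j. k j \<le> D + D'}. \<Sum>ef\<in>{ef \<in> A \<times> A'. add_exp ef = k}. summand ef)"
    using fin by (intro sum.group[symmetric]) (auto simp: A_def A'_def add_exp_def finite_exponent_box add_mono)
  also have "\<dots> = poly_eval (D + D')
     (\<lambda>k. \<Sum>(e, f)\<in>{(e, f). (\<forall>j. e j \<le> D) \<and> (\<forall>j. f j \<le> D') \<and> (\<lambda>j. e j + f j) = k}. c e * c' f) x"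
    unfolding poly_eval_def sum_distrib_right
    by (intro sum.cong refl) (auto simp: A_def A'_def summand_def add_exp_def monomial_def)
  finally show ?thesis .
qed

definition poly_in_snd ::
    "nat \<Rightarrow> ('a::real_normed_vector \<times> (real^'m::finite) \<Rightarrow> real) \<Rightarrow> bool" where
  "poly_in_snd D g \<longleftrightarrow>
     (\<exists>c. (\<forall>e. real_polynomial_function (c e)) \<and>
        (\<forall>p z. g (p, z) = poly_eval D (\<lambda>e. c e p) (vec_nth z)))"

lemma poly_in_snd_mono:
  assumes "D \<le> D'" and "poly_in_snd D g"
  shows "poly_in_snd D' g"
proof -
  obtain c where c: "\<And>e. real_polynomial_function (c e)"
      "\<And>p z. g (p, z) = poly_eval D (\<lambda>e. c e p) (vec_nth z)"
    using assms(2) by (auto simp: poly_in_snd_def)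
  have "real_polynomial_function (\<lambda>p. if P then c e p else 0)" for P e
    using c(1) by (cases P) auto
  then show ?thesis
    unfolding poly_in_snd_def
    by (intro exI[of _ "\<lambda>e p. if \<forall>j. e j \<le> D then c e p else 0"])
       (simp add: c(2) poly_eval_raise_degree[OF assms(1)])
qed

lemma poly_in_snd_add:
  assumes "poly_in_snd D f" and "poly_in_snd D g"
  shows "poly_in_snd D (\<lambda>x. f x + g x)"
proof -
  obtain c c' where c: "\<And>e. real_polynomial_function (c e)"
      "\<And>p z. f (p, z) = poly_eval D (\<lambda>e. c e p) (vec_nth z)"
    and c': "\<And>e. real_polynomial_function (c' e)"
      "\<And>p z. g (p, z) = poly_eval D (\<lambda>e. c' e p) (vec_nth z)"
    using assms by (auto simp: poly_in_snd_def)
  then show ?thesis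
    unfolding poly_in_snd_def
    by (intro exI[of _ "\<lambda>e p. c e p + c' e p"]) (auto simp: poly_eval_add)
qed

lemma poly_in_snd_mult:
  fixes f g :: "'a::real_normed_vector \<times> (real^'m::finite) \<Rightarrow> real"
  assumes "poly_in_snd D f" and "poly_in_snd D' g"
  shows "poly_in_snd (D + D') (\<lambda>x. f x * g x)"
proof -
  obtain c c' where c: "\<And>e. real_polynomial_function (c e)"
      "\<And>p z. f (p, z) = poly_eval D (\<lambda>e. c e p) (vec_nth z)"
    and c': "\<And>e. real_polynomial_function (c' e)"
      "\<And>p z. g (p, z) = poly_eval D' (\<lambda>e. c' e p) (vec_nth z)"
    using assms by (auto simp: poly_in_snd_def)
  let ?S = "\<lambda>k. {(e, f). (\<forall>j::'m. e j \<le> D) \<and> (\<forall>j. f j \<le> D') \<and> (\<lambda>j. e j + f j) = k}"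
  have "finite (?S k)" for k
    by (rule finite_subset[of _ "{e. \<forall>j. e j \<le> D} \<times> {f. \<forall>j. f j \<le> D'}"])
       (auto intro!: finite_cartesian_product finite_exponent_box)
  then have "real_polynomial_function (\<lambda>p. \<Sum>(e, f)\<in>?S k. c e p * c' f p)" for k
    using c(1) c'(1) by (intro real_polynomial_function_sum) (auto simp: case_prod_beta)
  moreover have "f (p, z) * g (p, z) = poly_eval (D + D') (\<lambda>k. \<Sum>(e, f)\<in>?S k. c e p * c' f p) (vec_nth z)"
    for p z
    by (simp add: c(2) c'(2) poly_eval_mult)
  ultimately show ?thesis
    unfolding poly_in_snd_def by (intro exI[of _ "\<lambda>k p. \<Sum>(e, f)\<in>?S k. c e p * c' f p"]) auto
qed

lemma poly_in_snd_fst: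
  assumes "real_polynomial_function f"
  shows "poly_in_snd 0 (\<lambda>x. f (fst x))"
  using assms unfolding poly_in_snd_def
  by (intro exI[of _ "\<lambda>e. f"]) (simp add: poly_eval_degree_zero)

lemma poly_in_snd_coordinate: "poly_in_snd 1 (\<lambda>x. snd x $ j)"
  unfolding poly_in_snd_def
  using poly_eval_coordinate[of j]
  by (intro exI[of _ "\<lambda>e p. if e = (\<lambda>i. if i = j then 1 else 0) then 1 else 0"]) auto

lemma poly_in_snd_sum:
  fixes f :: "'i \<Rightarrow> 'a::real_normed_vector \<times> (real^'m::finite) \<Rightarrow> real"
  assumes "finite I" and "\<And>i. i \<in> I \<Longrightarrow> poly_in_snd D (f i)"
  shows "poly_in_snd D (\<lambda>x. \<Sum>i\<in>I. f i x)"
  using assms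
proof (induction rule: finite_induct)
  case empty
  have "poly_in_snd 0 (\<lambda>x::'a \<times> (real^'m). 0)"
    by (rule poly_in_snd_fst) auto
  then show ?case
    using poly_in_snd_mono[of 0 D] by simp
next
  case (insert i I)
  then show ?case
    by (simp add: poly_in_snd_add)
qed

lemma poly_in_snd_bounded_linear:
  fixes f :: "'a::real_normed_vector \<times> (real^'m::finite) \<Rightarrow> real"
  assumes "bounded_linear f"
  shows "poly_in_snd 1 f"
proof -
  interpret f: bounded_linear f by fact
  have decomposition: "f = (\<lambda>x. f (fst x, 0) + (\<Sum>j\<in>UNIV. snd x $ j * f (0, axis j 1)))"
  proof
    fix x :: "'a \<times> (real^'m)"
    have "x = (fst x, 0) + (\<Sum>j\<in>UNIV. snd x $ j *\<^sub>R (0, axis j 1))"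
      using basis_expansion[of "snd x"]
      by (simp add: prod_eq_iff fst_sum snd_sum scalar_mult_eq_scaleR)
    then have "f x = f ((fst x, 0) + (\<Sum>j\<in>UNIV. snd x $ j *\<^sub>R (0, axis j 1)))"
      by (rule arg_cong)
    then show "f x = f (fst x, 0) + (\<Sum>j\<in>UNIV. snd x $ j * f (0, axis j 1))"
      by (simp only: f.add f.sum f.scaleR real_scaleR_def)
  qed
  have "bounded_linear (\<lambda>p::'a. f (p, 0))"
    by (intro bounded_linear_compose[OF assms] bounded_linear_Pair bounded_linear_ident bounded_linear_zero)
  then have "poly_in_snd 0 (\<lambda>x. f (fst x, 0))"
    by (intro poly_in_snd_fst) auto
  then have constant_part: "poly_in_snd 1 (\<lambda>x. f (fst x, 0))"
    by (rule poly_in_snd_mono[rotated]) simp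
  have "poly_in_snd (1 + 0) (\<lambda>x. snd x $ j * f (0, axis j 1))" for j
    by (intro poly_in_snd_mult poly_in_snd_coordinate poly_in_snd_fst) auto
  then have "poly_in_snd 1 (\<lambda>x. \<Sum>j\<in>UNIV. snd x $ j * f (0, axis j 1))"
    by (intro poly_in_snd_sum) auto
  with constant_part show ?thesis
    by (subst decomposition) (rule poly_in_snd_add)
qed

lemma real_polynomial_function_imp_poly_in_snd:
  fixes g :: "'a::real_normed_vector \<times> (real^'m::finite) \<Rightarrow> real"
  assumes "real_polynomial_function g"
  shows "\<exists>D. poly_in_snd D g"
  using assms
proof induction
  case (linear f)
  then show ?case
    using poly_in_snd_bounded_linear by blast
next
  case (const c)
  have "poly_in_snd 0 (\<lambda>x::'a \<times> (real^'m). c)"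
    by (rule poly_in_snd_fst) auto
  then show ?case ..
next
  case (add f g)
  then obtain D D' where "poly_in_snd D f" "poly_in_snd D' g"
    by blast
  then have "poly_in_snd (max D D') (\<lambda>x. f x + g x)"
    by (intro poly_in_snd_add poly_in_snd_mono[of D "max D D'"] poly_in_snd_mono[of D' "max D D'"]) auto
  then show ?case ..
next
  case (mult f g)
  then obtain D D' where "poly_in_snd D f" "poly_in_snd D' g"
    by blast
  then have "poly_in_snd (D + D') (\<lambda>x. f x * g x)"
    by (rule poly_in_snd_mult)
  then show ?case ..
qed

lemma real_polynomial_functions_common_expansion:
  fixes g :: "'i::finite \<Rightarrow> 'a::real_normed_vector \<times> (real^'m::finite) \<Rightarrow> real"
  assumes "\<And>i. real_polynomial_function (g i)"
  obtains c D where "\<And>i e. real_polynomial_function (c i e)"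
    and "\<And>i p z. g i (p, z) = poly_eval D (\<lambda>e. c i e p) (vec_nth z)"
proof -
  obtain D where "\<And>i. poly_in_snd (D i) (g i)"
    using real_polynomial_function_imp_poly_in_snd[OF assms] by metis
  then have "poly_in_snd (Max (range D)) (g i)" for i
    by (rule poly_in_snd_mono[rotated]) simp
  then have "\<forall>i. \<exists>c. (\<forall>e. real_polynomial_function (c e)) \<and>
      (\<forall>p z. g i (p, z) = poly_eval (Max (range D)) (\<lambda>e. c e p) (vec_nth z))"
    by (simp add: poly_in_snd_def)
  then show ?thesis
    using that by metis
qed

section \<open>The phase ansatz\<close>

lemma sum_UNIV_Plus:
  fixes f :: "'a::finite + 'b::finite \<Rightarrow> 'c::comm_monoid_add"
  shows "(\<Sum>x\<in>UNIV. f x) = (\<Sum>a\<in>UNIV. f (Inl a)) + (\<Sum>b\<in>UNIV. f (Inr b))"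
  by (simp add: sum.Plus flip: UNIV_Plus_UNIV)

lemma vec_eq_iff_Plus:
  "v = w \<longleftrightarrow> (\<forall>a. v $ Inl a = w $ Inl a) \<and> (\<forall>j. v $ Inr j = w $ Inr j)"
  by (metis obj_sumE vec_eq_iff)

lemma sum_matrix_vector_mult: "(\<Sum>i\<in>S. A i) *v x = (\<Sum>i\<in>S. A i *v x)"
  by (induction S rule: infinite_finite_induct) (auto simp: matrix_vector_mult_add_rdistrib)

definition mu_matrix :: "real \<Rightarrow> complex^'m::finite \<Rightarrow> complex^'m
    \<Rightarrow> complex^('n::{finite,wellorder} + 'm)^('n + 'm)" where
  "mu_matrix b d \<alpha> =
    (let B = (\<chi> a c'. if a = c' \<and> a = first_idx then complex_of_real b else 0)
           :: complex^('n::{finite,wellorder})^('n::{finite,wellorder});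
         Dm = (\<chi> a c'. if a = c' then d $ a else 0) :: complex^'m^'m;
         u = (\<chi> a c'. if c' = first_idx then \<alpha> $ a else 0) :: complex^('n::{finite,wellorder})^'m
     in block_mat 0 (- (B ** cadj u)) (u ** B) Dm)"

lemma mu_matrix_entries:
  "mu_matrix b d \<alpha> $ Inl a $ Inl c = 0"
  "mu_matrix b d \<alpha> $ Inl a $ Inr j = (if a = first_idx then - b * cnj (\<alpha> $ j) else 0)"
  "mu_matrix b d \<alpha> $ Inr j $ Inl c = (if c = first_idx then b * \<alpha> $ j else 0)"
  "mu_matrix b d \<alpha> $ Inr j $ Inr l = (if j = l then d $ j else 0)"
  by (simp_all add: mu_matrix_def Let_def block_mat_def matrix_matrix_mult_def cadj_def cong: if_cong)
    (auto simp: if_distrib[of "\<lambda>x. x * _"] if_distrib[of "\<lambda>x. _ * x"] cong: if_cong)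

lemma mu_matrix_mult_vec_Inl:
  "(mu_matrix b d \<alpha> *v v) $ Inl a =
     (if a = first_idx then - b * (\<Sum>j\<in>UNIV. cnj (\<alpha> $ j) * v $ Inr j) else 0)"
  by (simp add: matrix_vector_mult_def sum_UNIV_Plus mu_matrix_entries sum_distrib_left sum_negf mult.assoc)

lemma mu_matrix_mult_vec_Inr:
  "(mu_matrix b d \<alpha> *v v) $ Inr j = b * \<alpha> $ j * v $ Inl first_idx + d $ j * v $ Inr j"
  by (simp add: matrix_vector_mult_def sum_UNIV_Plus mu_matrix_entries if_distrib[of "\<lambda>x. x * _"]
      cong: if_cong)

definition inr_vec :: "complex^'m \<Rightarrow> complex^('n::finite + 'm::finite)" where
  "inr_vec \<alpha> = (\<chi> i. case i of Inl _ \<Rightarrow> 0 | Inr j \<Rightarrow> \<alpha> $ j)"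

lemma minus_block_mult_first_column:
  fixes X :: "complex^('n::{finite,wellorder} + 'm::finite)^('n + 'm)"
  shows "(minus_block X ** (\<chi> a c. if c = first_idx then \<alpha> $ a else 0)) $ a $ c =
           (if c = first_idx then (X *v inr_vec \<alpha>) $ Inr a else 0)"
  by (simp add: matrix_matrix_mult_def matrix_vector_mult_def minus_block_def inr_vec_def sum_UNIV_Plus)

definition ansatz_vec :: "nat \<Rightarrow> real \<Rightarrow> ('m \<Rightarrow> real) \<Rightarrow> complex^'m
    \<Rightarrow> complex^('n::{finite,wellorder} + 'm::finite)" where
  "ansatz_vec t h g \<alpha> = (\<chi> i. case i of
      Inl a \<Rightarrow> if a = first_idx then \<i> ^ (t + 1) * h else 0
    | Inr j \<Rightarrow> \<i> ^ t * g j * \<alpha> $ j)"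

lemma ansatz_vec_zero: "ansatz_vec t 0 (\<lambda>_. 0) \<alpha> = 0"
  by (simp add: vec_eq_iff_Plus ansatz_vec_def)

lemma ansatz_vec_add:
  "ansatz_vec t h g \<alpha> + ansatz_vec t h' g' \<alpha> = ansatz_vec t (h + h') (\<lambda>j. g j + g' j) \<alpha>"
  by (simp add: vec_eq_iff_Plus ansatz_vec_def algebra_simps)

lemma inr_vec_eq_ansatz_vec: "inr_vec \<alpha> = ansatz_vec 0 0 (\<lambda>_. 1) \<alpha>"
  by (simp add: vec_eq_iff_Plus ansatz_vec_def inr_vec_def)

lemma Pplus_mult_ansatz_vec: "Pplus *v ansatz_vec t h g \<alpha> = ansatz_vec t h (\<lambda>_. 0) \<alpha>"
  by (simp add: vec_eq_iff_Plus ansatz_vec_def Pplus_def matrix_vector_mult_def sum_UNIV_Plus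
      if_distrib[of "\<lambda>x. x * _"] cong: if_cong)

lemma mu_matrix_mult_ansatz_vec:
  assumes "\<forall>j. Re (d $ j) = 0"
  shows "mu_matrix b d \<alpha> *v ansatz_vec t h g \<alpha> =
    ansatz_vec (Suc t) (b * (\<Sum>j\<in>UNIV. (cmod (\<alpha> $ j))\<^sup>2 * g j)) (\<lambda>j. b * h + Im (d $ j) * g j) \<alpha>"
proof -
  have "cnj (\<alpha> $ j) * (\<i> ^ t * g j * \<alpha> $ j) = \<i> ^ t * ((cmod (\<alpha> $ j))\<^sup>2 * g j)" for j
    by (simp only: of_real_mult complex_norm_square mult_ac)
  then have "(\<Sum>j\<in>UNIV. cnj (\<alpha> $ j) * (\<i> ^ t * g j * \<alpha> $ j)) =
      \<i> ^ t * (\<Sum>j\<in>UNIV. (cmod (\<alpha> $ j))\<^sup>2 * g j)"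
    by (simp only: sum_distrib_left of_real_sum)
  moreover have "d $ j = \<i> * Im (d $ j)" for j
    using assms by (simp add: complex_eq_iff)
  ultimately show ?thesis
    by (simp add: vec_eq_iff_Plus mu_matrix_mult_vec_Inl mu_matrix_mult_vec_Inr ansatz_vec_def
        algebra_simps del: of_real_power)
qed

definition ansatz_point ::
    "real \<Rightarrow> complex^'m \<Rightarrow> complex^'m \<Rightarrow> (real \<times> (real^'m)) \<times> (real^'m::finite)" where
  "ansatz_point b d \<alpha> = ((b, \<chi> j. Im (d $ j)), \<chi> j. (cmod (\<alpha> $ j))\<^sup>2)"

definition polynomial_ansatz ::
  "nat \<Rightarrow> (real \<Rightarrow> complex^'m \<Rightarrow> complex^'m \<Rightarrow> complex^('n::{finite,wellorder} + 'm::finite)) \<Rightarrow> bool" where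
  "polynomial_ansatz t F \<longleftrightarrow>
     (\<exists>h g. real_polynomial_function h \<and> (\<forall>j. real_polynomial_function (g j)) \<and>
        (\<forall>b d \<alpha>. (\<forall>j. Re (d $ j) = 0) \<longrightarrow>
           F b d \<alpha> = ansatz_vec t (h (ansatz_point b d \<alpha>)) (\<lambda>j. g j (ansatz_point b d \<alpha>)) \<alpha>))"

lemma polynomial_ansatzI:
  assumes "real_polynomial_function h" and "\<And>j. real_polynomial_function (g j)"
    and "\<And>b d \<alpha>. \<forall>j. Re (d $ j) = 0 \<Longrightarrow>
      F b d \<alpha> = ansatz_vec t (h (ansatz_point b d \<alpha>)) (\<lambda>j. g j (ansatz_point b d \<alpha>)) \<alpha>"
  shows "polynomial_ansatz t F"
  using assms unfolding polynomial_ansatz_def by blast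

lemma polynomial_ansatzE:
  assumes "polynomial_ansatz t F"
  obtains h g where "real_polynomial_function h" and "\<And>j. real_polynomial_function (g j)"
    and "\<And>b d \<alpha>. \<forall>j. Re (d $ j) = 0 \<Longrightarrow>
      F b d \<alpha> = ansatz_vec t (h (ansatz_point b d \<alpha>)) (\<lambda>j. g j (ansatz_point b d \<alpha>)) \<alpha>"
  using assms unfolding polynomial_ansatz_def by blast

lemma polynomial_ansatz_inr_vec: "polynomial_ansatz 0 (\<lambda>b d \<alpha>. inr_vec \<alpha>)"
  by (rule polynomial_ansatzI[of "\<lambda>_. 0" "\<lambda>_ _. 1"]) (auto simp: inr_vec_eq_ansatz_vec)

lemma polynomial_ansatz_zero: "polynomial_ansatz t (\<lambda>b d \<alpha>. 0)"
  by (rule polynomial_ansatzI[of "\<lambda>_. 0" "\<lambda>_ _. 0"]) (auto simp: ansatz_vec_zero)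

lemma polynomial_ansatz_add:
  assumes "polynomial_ansatz t F" and "polynomial_ansatz t G"
  shows "polynomial_ansatz t (\<lambda>b d \<alpha>. F b d \<alpha> + G b d \<alpha>)"
proof -
  obtain h g where "real_polynomial_function h" "\<And>j. real_polynomial_function (g j)"
    and F: "\<And>b d \<alpha>. \<forall>j. Re (d $ j) = 0 \<Longrightarrow>
      F b d \<alpha> = ansatz_vec t (h (ansatz_point b d \<alpha>)) (\<lambda>j. g j (ansatz_point b d \<alpha>)) \<alpha>"
    using assms(1) by (elim polynomial_ansatzE) blast
  moreover obtain h' g' where "real_polynomial_function h'" "\<And>j. real_polynomial_function (g' j)"
    and G: "\<And>b d \<alpha>. \<forall>j. Re (d $ j) = 0 \<Longrightarrow>
      G b d \<alpha> = ansatz_vec t (h' (ansatz_point b d \<alpha>)) (\<lambda>j. g' j (ansatz_point b d \<alpha>)) \<alpha>"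
    using assms(2) by (elim polynomial_ansatzE) blast
  ultimately show ?thesis
    by (intro polynomial_ansatzI[of "\<lambda>x. h x + h' x" "\<lambda>j x. g j x + g' j x"])
       (auto simp: F G ansatz_vec_add)
qed

lemma polynomial_ansatz_sum:
  assumes "finite S" and "\<And>i. i \<in> S \<Longrightarrow> polynomial_ansatz t (F i)"
  shows "polynomial_ansatz t (\<lambda>b d \<alpha>. \<Sum>i\<in>S. F i b d \<alpha>)"
  using assms by (induction rule: finite_induct) (auto intro: polynomial_ansatz_zero polynomial_ansatz_add)

lemma polynomial_ansatz_Ppow:
  assumes "polynomial_ansatz t F"
  shows "polynomial_ansatz t (\<lambda>b d \<alpha>. Ppow i *v F b d \<alpha>)"
proof (cases "i = 0")
  case False
  obtain h g where "real_polynomial_function h"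
    and F: "\<And>b d \<alpha>. \<forall>j. Re (d $ j) = 0 \<Longrightarrow>
      F b d \<alpha> = ansatz_vec t (h (ansatz_point b d \<alpha>)) (\<lambda>j. g j (ansatz_point b d \<alpha>)) \<alpha>"
    using assms by (elim polynomial_ansatzE) blast
  with False show ?thesis
    by (intro polynomial_ansatzI[of h "\<lambda>_ _. 0"]) (auto simp: Ppow_def F Pplus_mult_ansatz_vec)
qed (simp add: Ppow_def assms)

lemma polynomial_ansatz_mu:
  fixes F :: "real \<Rightarrow> complex^'m::finite \<Rightarrow> complex^'m \<Rightarrow> complex^('n::{finite,wellorder} + 'm)"
  assumes "polynomial_ansatz t F"
  shows "polynomial_ansatz (Suc t) (\<lambda>b d \<alpha>. mu_matrix b d \<alpha> *v F b d \<alpha>)"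
proof -
  obtain h g where h: "real_polynomial_function h" and g: "\<And>j. real_polynomial_function (g j)"
    and F: "\<And>b d \<alpha>. \<forall>j. Re (d $ j) = 0 \<Longrightarrow>
      F b d \<alpha> = ansatz_vec t (h (ansatz_point b d \<alpha>)) (\<lambda>j. g j (ansatz_point b d \<alpha>)) \<alpha>"
    using assms by (elim polynomial_ansatzE) blast
  have coordinates: "real_polynomial_function (\<lambda>x. fst (fst x))"
    "real_polynomial_function (\<lambda>x. snd (fst x) $ j)" "real_polynomial_function (\<lambda>x. snd x $ j)"
    for j :: 'm
    by (auto intro!: bounded_linear_fst_comp bounded_linear_snd_comp bounded_linear_fst bounded_linear_snd
        bounded_linear_compose[OF bounded_linear_vec_nth])
  show ?thesis
  proof (rule polynomial_ansatzI[of "\<lambda>x. fst (fst x) * (\<Sum>j\<in>UNIV. snd x $ j * g j x)"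
        "\<lambda>j x. fst (fst x) * h x + snd (fst x) $ j * g j x"])
    show "real_polynomial_function (\<lambda>x. fst (fst x) * (\<Sum>j\<in>UNIV. snd x $ j * g j x))"
      by (intro real_polynomial_function.intros(3,4) real_polynomial_function_sum coordinates g finite)
    show "real_polynomial_function (\<lambda>x. fst (fst x) * h x + snd (fst x) $ j * g j x)" for j
      by (intro real_polynomial_function.intros(3,4) coordinates g h)
  qed (simp add: F mu_matrix_mult_ansatz_vec ansatz_point_def)
qed

lemma polynomial_ansatz_Hword:
  assumes "polynomial_ansatz t F"
  shows "polynomial_ansatz (t + m) (\<lambda>b d \<alpha>. Hword (mu_matrix b d \<alpha>) m i *v F b d \<alpha>)"
  using assms
proof (induction m arbitrary: t F)
  case 0
  then show ?case
    by (simp add: polynomial_ansatz_Ppow)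
next
  case (Suc m)
  have "polynomial_ansatz (Suc t) (\<lambda>b d \<alpha>. mu_matrix b d \<alpha> *v (Ppow (i (Suc m)) *v F b d \<alpha>))"
    by (intro polynomial_ansatz_mu polynomial_ansatz_Ppow Suc.prems)
  from Suc.IH[OF this] show ?case
    by (simp add: matrix_vector_mul_assoc matrix_mul_assoc)
qed

lemma polynomial_ansatz_Hml:
  assumes "polynomial_ansatz t F"
  shows "polynomial_ansatz (t + m) (\<lambda>b d \<alpha>. Hml m l (mu_matrix b d \<alpha>) *v F b d \<alpha>)"
proof -
  have "finite {i \<in> {..m} \<rightarrow>\<^sub>E {0::nat, 1}. (\<Sum>r\<le>m. i r) = l}"
    by (rule finite_subset[OF _ finite_PiE[of "{..m}" "\<lambda>_. {0::nat, 1}"]]) auto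
  then show ?thesis
    unfolding Hml_def sum_matrix_vector_mult
    by (intro polynomial_ansatz_sum polynomial_ansatz_Hword assms)
qed

lemma mu_Hml_first_column:
  assumes "1 \<le> n"
  obtains g where "\<And>a. real_polynomial_function (g a)"
    and "\<And>b d \<alpha> a c. \<forall>j. Re (d $ j) = 0 \<Longrightarrow>
      \<i> ^ (n + 1) *
        (minus_block ((mu_matrix b d \<alpha> :: complex^('n::{finite,wellorder} + 'm::finite)^('n + 'm))
            ** Hml (n - 1) (k - 1) (mu_matrix b d \<alpha>))
          ** ((\<chi> a c. if c = first_idx then \<alpha> $ a else 0) :: complex^('n::{finite,wellorder})^'m)) $ a $ c =
      (if c = first_idx then \<i> * g a (ansatz_point b d \<alpha>) * \<alpha> $ a else 0)"
proof -
  let ?X = "\<lambda>b d \<alpha>. mu_matrix b d \<alpha> ** Hml (n - 1) (k - 1) (mu_matrix b d \<alpha>)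
    :: complex^('n::{finite,wellorder} + 'm)^('n + 'm)"
  have "polynomial_ansatz (Suc (0 + (n - 1)))
      (\<lambda>b d \<alpha>. mu_matrix b d \<alpha> *v (Hml (n - 1) (k - 1) (mu_matrix b d \<alpha>) *v inr_vec \<alpha>))"
    by (intro polynomial_ansatz_mu polynomial_ansatz_Hml polynomial_ansatz_inr_vec)
  then have "polynomial_ansatz n (\<lambda>b d \<alpha>. ?X b d \<alpha> *v inr_vec \<alpha>)"
    using assms by (simp add: matrix_vector_mul_assoc)
  then obtain h g where g: "\<And>j. real_polynomial_function (g j)"
    and X: "\<And>b d \<alpha>. \<forall>j. Re (d $ j) = 0 \<Longrightarrow>
      ?X b d \<alpha> *v inr_vec \<alpha> = ansatz_vec n (h (ansatz_point b d \<alpha>)) (\<lambda>j. g j (ansatz_point b d \<alpha>)) \<alpha>"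
    by (elim polynomial_ansatzE) blast
  have phase: "\<i> ^ n * \<i> ^ n = (-1 :: complex) ^ n"
    by (simp flip: power_mult_distrib)
  show ?thesis
  proof (rule that[of "\<lambda>a x. (-1) ^ n * g a x"])
    show "real_polynomial_function (\<lambda>x. (-1) ^ n * g a x)" for a
      by (intro real_polynomial_function.intros(2,4) g)
    fix b :: real and d \<alpha> :: "complex^'m" and a :: 'm and c :: 'n
    assume "\<forall>j. Re (d $ j) = 0"
    then show "\<i> ^ (n + 1) * (minus_block (?X b d \<alpha>)
          ** ((\<chi> a c. if c = first_idx then \<alpha> $ a else 0) :: complex^('n::{finite,wellorder})^'m)) $ a $ c =
        (if c = first_idx then \<i> * complex_of_real ((-1) ^ n * g a (ansatz_point b d \<alpha>)) * \<alpha> $ a else 0)"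
      unfolding minus_block_mult_first_column X[OF \<open>\<forall>j. Re (d $ j) = 0\<close>]
      by (simp add: ansatz_vec_def phase mult_ac)
  qed
qed

theorem proposition4p1:
  fixes n k :: nat
  assumes "1 \<le> n" and "1 \<le> k" and "k \<le> n + 1"
  shows "\<exists>(D::nat) (c :: 'm::finite \<Rightarrow> ('m \<Rightarrow> nat) \<Rightarrow> real \<times> (real^'m) \<Rightarrow> real).
     (\<forall>j e. C_inf_on ({0<..} \<times> UNIV) (c j e)) \<and>
     (\<forall>(b::real) (d::complex^'m) (\<alpha>::complex^'m).
        0 < b \<longrightarrow> (\<forall>j. Re (d $ j) = 0) \<longrightarrow> (\<Sum>j\<in>UNIV. (cmod (\<alpha> $ j))\<^sup>2) = 1 \<longrightarrow>
        (let B = (\<chi> a c'. if a = c' \<and> a = first_idx then complex_of_real b else 0)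
                   :: complex^('n::{finite,wellorder})^('n::{finite,wellorder});
             Dm = (\<chi> a c'. if a = c' then d $ a else 0) :: complex^'m^'m;
             u = (\<chi> a c'. if c' = first_idx then \<alpha> $ a else 0) :: complex^('n::{finite,wellorder})^'m;
             \<mu> = block_mat 0 (- (B ** cadj u)) (u ** B) Dm;
             R = (\<chi> a c'. \<i> ^ (n + 1) * (minus_block (\<mu> ** Hml (n - 1) (k - 1) \<mu>) ** u) $ a $ c')
        in \<forall>a c'. R $ a $ c' =
             (if c' = first_idx
              then \<i> * complex_of_real
                     (poly_eval D (\<lambda>e. c a e (b, \<chi> j. Im (d $ j))) (\<lambda>j. (cmod (\<alpha> $ j))\<^sup>2)) * \<alpha> $ a
              else 0)))"
proof -
  obtain g where g: "\<And>a. real_polynomial_function (g a)"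
    and column: "\<And>b d \<alpha> a c. \<forall>j. Re (d $ j) = 0 \<Longrightarrow>
      \<i> ^ (n + 1) *
        (minus_block ((mu_matrix b d \<alpha> :: complex^('n::{finite,wellorder} + 'm::finite)^('n + 'm))
            ** Hml (n - 1) (k - 1) (mu_matrix b d \<alpha>))
          ** ((\<chi> a c. if c = first_idx then \<alpha> $ a else 0) :: complex^('n::{finite,wellorder})^'m)) $ a $ c =
      (if c = first_idx then \<i> * g a (ansatz_point b d \<alpha>) * \<alpha> $ a else 0)"
    using mu_Hml_first_column[OF assms(1)] by blast
  obtain c D where c: "\<And>a e. real_polynomial_function (c a e)"
    and expansion: "\<And>a p z. g a (p, z) = poly_eval D (\<lambda>e. c a e p) (vec_nth z)"
    using real_polynomial_functions_common_expansion[of g, OF g] by blast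
  show ?thesis
    unfolding Let_def mu_matrix_def[unfolded Let_def, symmetric] vec_lambda_beta
    by (intro exI[of _ D] exI[of _ c] conjI allI impI real_polynomial_function_C_inf_on c)
       (subst column, assumption, simp add: expansion ansatz_point_def vec_lambda_inverse)
qed

end
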